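(* Let $p\geq 5$ be prime. Then all odd numbers $$2k(n,p)^{+}+1=(2n+1)p+4N(p/6),\quad n=0,1,2,\ldots,$$ $$2k(n,p)^{-}+1=(2n+1)p-4N(p/6),\quad n=1,2,\ldots,$$ are non-ranks. More precisely: (a) If $p\equiv 1\pmod 6$, then $3(2k(n,p)^{+}+1)\mp 2$ is the pair $([3(2n+1)+2]p-4,\,[3(2n+1)+2]p)$, and $3(2k(n,p)^{-}+1)\mp 2$ is the pair $([3(2n+1)-2]p,\,[3(2n+1)-2]p+4)$. (b) If $p\equiv -1\pmod 6$, then $3(2k(n,p)^{+}+1)\mp 2$ is the pair $([3(2n+1)+2]p,\,[3(2n+1)+2]p+4)$, and $3(2k(n,p)^{-}+1)\mp 2$ is the pair $([3(2n+1)-2]p-4,\,[3(2n+1)-2]p)$. Each of these pairs contains a composite number.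
   Context: $N(x)$ denotes the integer nearest to the real number $x$ (for prime $p\geq5$, $N(p/6)=(p-1)/6$ if $p\equiv1\pmod6$ and $(p+1)/6$ if $p\equiv-1\pmod6$). An odd integer $t\geq 3$ is a twin-4 rank if $3t-2$ and $3t+2$ are both prime, and a non-rank otherwise. *)

theory Defs
  imports Complex_Main "HOL-Computational_Algebra.Primes"
begin

text \<open>N(x): the integer nearest to x (ties, which never occur for p/6 with p prime \<ge> 5,
  are rounded up).\<close>
definition nearest_int :: "real \<Rightarrow> int" where
  "nearest_int x = \<lfloor>x + 1/2\<rfloor>"

definition twin4_rank :: "int \<Rightarrow> bool" where
  "twin4_rank t \<longleftrightarrow> odd t \<and> t \<ge> 3 \<and> prime (3*t - 2) \<and> prime (3*t + 2)"

definition non_rank :: "int \<Rightarrow> bool" where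
  "non_rank t \<longleftrightarrow> odd t \<and> t \<ge> 3 \<and> \<not> (prime (3*t - 2) \<and> prime (3*t + 2))"

definition composite :: "int \<Rightarrow> bool" where
  "composite m \<longleftrightarrow> m > 1 \<and> \<not> prime m"

end

theory Submission
  imports Defs
begin

text \<open>A prime p \<ge> 5 satisfies p \<equiv> \<plusminus>1 (mod 6), and 4 N(p/6) = 2(p \<mp> 1)/3. Hence for the two
  candidate ranks t = (2n+1)p \<plusminus> 4N(p/6) one of 3t - 2, 3t + 2 equals (6n+5)p resp. (6n+1)p,
  a product of two factors greater than 1.\<close>

lemma composite_mult:
  fixes a b :: int
  assumes "a > 1" "b > 1"
  shows "composite (a * b)"
proof -
  have "a * b > 1"
    using assms by (smt (verit) mult_less_cancel_left1)
  moreover have "\<not> prime (a * b)"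
  proof
    assume "prime (a * b)"
    then have "a = 1 \<or> a = a * b"
      using assms unfolding prime_int_iff by (meson dvd_triv_left less_imp_le less_trans zero_less_one)
    then show False
      using assms by auto
  qed
  ultimately show ?thesis
    by (simp add: composite_def)
qed

lemma non_rank_if_composite_neighbour:
  assumes "odd t" "t \<ge> 3" "composite (3*t - 2) \<or> composite (3*t + 2)"
  shows "non_rank t"
  using assms by (auto simp: non_rank_def composite_def)

lemma prime_mod_6:
  fixes p :: nat
  assumes "prime p" "p \<ge> 5"
  shows "p mod 6 = 1 \<or> p mod 6 = 5"
proof -
  have "\<not> q dvd p" if "prime q" "q < 5" for q :: nat
    using assms that primes_dvd_imp_eq by (metis not_less)
  moreover have "prime (2::nat)" "prime (3::nat)"
    by simp_all
  ultimately have "\<not> 2 dvd p" "\<not> 3 dvd p"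
    by simp_all
  then show ?thesis
    by presburger
qed

lemma six_nearest_int_sixth:
  fixes p :: nat
  shows "p mod 6 = 1 \<Longrightarrow> 6 * nearest_int (real p / 6) = int p - 1"
    and "p mod 6 = 5 \<Longrightarrow> 6 * nearest_int (real p / 6) = int p + 1"
proof -
  define k where "k = p div 6"
  have p: "p = 6*k + p mod 6"
    unfolding k_def by simp
  show "6 * nearest_int (real p / 6) = int p - 1" if "p mod 6 = 1"
  proof -
    have "real p / 6 + 1/2 = real k + 2/3"
      using p that by (simp add: field_simps)
    then have "nearest_int (real p / 6) = int k"
      unfolding nearest_int_def by (simp add: floor_eq_iff)
    then show ?thesis
      using p that by simp
  qed
  show "6 * nearest_int (real p / 6) = int p + 1" if "p mod 6 = 5"
  proof -
    have "real p / 6 + 1/2 = real k + 1 + 1/3"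
      using p that by (simp add: field_simps)
    then have "nearest_int (real p / 6) = int k + 1"
      unfolding nearest_int_def by (simp add: floor_eq_iff)
    then show ?thesis
      using p that by simp
  qed
qed

lemma rank_neighbours_mod_6_eq_1:
  fixes p :: nat and n :: int
  assumes "p mod 6 = 1"
  shows "3*((2*n+1)*int p + 4*nearest_int (real p/6)) - 2 = (3*(2*n+1)+2)*int p - 4"
    and "3*((2*n+1)*int p + 4*nearest_int (real p/6)) + 2 = (3*(2*n+1)+2)*int p"
    and "3*((2*n+1)*int p - 4*nearest_int (real p/6)) - 2 = (3*(2*n+1)-2)*int p"
    and "3*((2*n+1)*int p - 4*nearest_int (real p/6)) + 2 = (3*(2*n+1)-2)*int p + 4"
  using six_nearest_int_sixth(1)[OF assms] by (simp_all add: algebra_simps)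

lemma rank_neighbours_mod_6_eq_5:
  fixes p :: nat and n :: int
  assumes "p mod 6 = 5"
  shows "3*((2*n+1)*int p + 4*nearest_int (real p/6)) - 2 = (3*(2*n+1)+2)*int p"
    and "3*((2*n+1)*int p + 4*nearest_int (real p/6)) + 2 = (3*(2*n+1)+2)*int p + 4"
    and "3*((2*n+1)*int p - 4*nearest_int (real p/6)) - 2 = (3*(2*n+1)-2)*int p - 4"
    and "3*((2*n+1)*int p - 4*nearest_int (real p/6)) + 2 = (3*(2*n+1)-2)*int p"
  using six_nearest_int_sixth(2)[OF assms] by (simp_all add: algebra_simps)

lemma upper_rank_neighbour_composite:
  fixes p n :: nat
  assumes "prime p" "p \<ge> 5"
  shows "composite (3*((2*int n+1)*int p + 4*nearest_int (real p/6)) - 2) \<or>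
         composite (3*((2*int n+1)*int p + 4*nearest_int (real p/6)) + 2)"
proof -
  have "composite ((3*(2*int n+1)+2) * int p)"
    using assms(2) by (intro composite_mult) auto
  then show ?thesis
    using prime_mod_6[OF assms] rank_neighbours_mod_6_eq_1(2) rank_neighbours_mod_6_eq_5(1)
    by metis
qed

lemma lower_rank_neighbour_composite:
  fixes p n :: nat
  assumes "prime p" "p \<ge> 5" "n \<ge> 1"
  shows "composite (3*((2*int n+1)*int p - 4*nearest_int (real p/6)) - 2) \<or>
         composite (3*((2*int n+1)*int p - 4*nearest_int (real p/6)) + 2)"
proof -
  have "composite ((3*(2*int n+1)-2) * int p)"
    using assms(2,3) by (intro composite_mult) auto
  then show ?thesis
    using prime_mod_6[OF assms(1,2)] rank_neighbours_mod_6_eq_1(3) rank_neighbours_mod_6_eq_5(4)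
    by metis
qed

lemma rank_candidates_odd_ge_3:
  fixes p n :: nat
  assumes "prime p" "p \<ge> 5"
  shows "odd ((2*int n+1)*int p + 4*nearest_int (real p/6))"
    and "(2*int n+1)*int p + 4*nearest_int (real p/6) \<ge> 3"
    and "odd ((2*int n+1)*int p - 4*nearest_int (real p/6))"
    and "n \<ge> 1 \<Longrightarrow> (2*int n+1)*int p - 4*nearest_int (real p/6) \<ge> 3"
proof -
  have p_mod_6: "p mod 6 = 1 \<or> p mod 6 = 5"
    using prime_mod_6[OF assms] .
  then have "odd p"
    by presburger
  then show "odd ((2*int n+1)*int p + 4*nearest_int (real p/6))"
    and "odd ((2*int n+1)*int p - 4*nearest_int (real p/6))"
    by simp_all
  have N_bounds: "0 \<le> 6 * nearest_int (real p/6)" "6 * nearest_int (real p/6) \<le> int p + 1"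
    using p_mod_6 six_nearest_int_sixth[of p] by auto
  have "int p \<le> (2*int n+1)*int p"
    by (simp add: algebra_simps)
  then show "(2*int n+1)*int p + 4*nearest_int (real p/6) \<ge> 3"
    using N_bounds assms(2) by linarith
  show "(2*int n+1)*int p - 4*nearest_int (real p/6) \<ge> 3" if "n \<ge> 1"
  proof -
    have "3 * int p \<le> (2*int n+1)*int p"
      using that by (intro mult_right_mono) auto
    then show ?thesis
      using N_bounds assms(2) by linarith
  qed
qed

theorem lemma2p5:
  fixes p :: nat
  assumes "prime p" and "p \<ge> 5"
  shows
   "(\<forall>n::nat. non_rank ((2*int n+1)*int p + 4*nearest_int (real p/6))) \<and>
    (\<forall>n::nat. n \<ge> 1 \<longrightarrow> non_rank ((2*int n+1)*int p - 4*nearest_int (real p/6))) \<and>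
    (p mod 6 = 1 \<longrightarrow>
       (\<forall>n::nat. 3*((2*int n+1)*int p + 4*nearest_int (real p/6)) - 2 = (3*(2*int n+1)+2)*int p - 4 \<and>
                 3*((2*int n+1)*int p + 4*nearest_int (real p/6)) + 2 = (3*(2*int n+1)+2)*int p) \<and>
       (\<forall>n::nat. n \<ge> 1 \<longrightarrow>
                 3*((2*int n+1)*int p - 4*nearest_int (real p/6)) - 2 = (3*(2*int n+1)-2)*int p \<and>
                 3*((2*int n+1)*int p - 4*nearest_int (real p/6)) + 2 = (3*(2*int n+1)-2)*int p + 4)) \<and>
    (p mod 6 = 5 \<longrightarrow>
       (\<forall>n::nat. 3*((2*int n+1)*int p + 4*nearest_int (real p/6)) - 2 = (3*(2*int n+1)+2)*int p \<and>
                 3*((2*int n+1)*int p + 4*nearest_int (real p/6)) + 2 = (3*(2*int n+1)+2)*int p + 4) \<and>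
       (\<forall>n::nat. n \<ge> 1 \<longrightarrow>
                 3*((2*int n+1)*int p - 4*nearest_int (real p/6)) - 2 = (3*(2*int n+1)-2)*int p - 4 \<and>
                 3*((2*int n+1)*int p - 4*nearest_int (real p/6)) + 2 = (3*(2*int n+1)-2)*int p)) \<and>
    (\<forall>n::nat. composite (3*((2*int n+1)*int p + 4*nearest_int (real p/6)) - 2) \<or>
              composite (3*((2*int n+1)*int p + 4*nearest_int (real p/6)) + 2)) \<and>
    (\<forall>n::nat. n \<ge> 1 \<longrightarrow>
              composite (3*((2*int n+1)*int p - 4*nearest_int (real p/6)) - 2) \<or>
              composite (3*((2*int n+1)*int p - 4*nearest_int (real p/6)) + 2))"
  using non_rank_if_composite_neighbour rank_candidates_odd_ge_3[OF assms]
    upper_rank_neighbour_composite[OF assms] lower_rank_neighbour_composite[OF assms]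
    rank_neighbours_mod_6_eq_1 rank_neighbours_mod_6_eq_5
  by simp

end
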